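(* Let $r\ge 2$ and let $GT(r)$ be the glued binary tree of depth $r$. Then $\mathrm{gp}(GT(r))=2^r$.
   Context: The complete binary tree of depth $r$ is the rooted tree in which every non-leaf vertex has exactly two children and all $2^r$ leaves are at distance $r$ from the root. The glued binary tree $GT(r)$ is obtained from two copies of the complete binary tree of depth $r$ by identifying each leaf of the first copy with the corresponding leaf of the second copy (so it has $2^r$ identified vertices, called quasi-leaves). A set of vertices of a graph is a general position set if no three of its vertices lie on a common geodesic (shortest path); $\mathrm{gp}(G)$ is the maximum cardinality of a general position set of $G$. *)

theory Defs
  imports Main
begin

definition is_walk :: "'a set \<Rightarrow> ('a \<Rightarrow> 'a \<Rightarrow> bool) \<Rightarrow> 'a list \<Rightarrow> bool" where
  "is_walk V E xs \<longleftrightarrow> xs \<noteq> [] \<and> set xs \<subseteq> V \<and>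
     (\<forall>i. Suc i < length xs \<longrightarrow> E (xs ! i) (xs ! Suc i))"

definition gdist :: "'a set \<Rightarrow> ('a \<Rightarrow> 'a \<Rightarrow> bool) \<Rightarrow> 'a \<Rightarrow> 'a \<Rightarrow> nat" where
  "gdist V E x y = (LEAST n. \<exists>xs. is_walk V E xs \<and> hd xs = x \<and> last xs = y \<and> length xs = Suc n)"

definition is_geodesic :: "'a set \<Rightarrow> ('a \<Rightarrow> 'a \<Rightarrow> bool) \<Rightarrow> 'a list \<Rightarrow> bool" where
  "is_geodesic V E xs \<longleftrightarrow> is_walk V E xs \<and> length xs = Suc (gdist V E (hd xs) (last xs))"

definition gp_set :: "'a set \<Rightarrow> ('a \<Rightarrow> 'a \<Rightarrow> bool) \<Rightarrow> 'a set \<Rightarrow> bool" where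
  "gp_set V E S \<longleftrightarrow> S \<subseteq> V \<and>
     \<not> (\<exists>u v w xs. u \<in> S \<and> v \<in> S \<and> w \<in> S \<and> u \<noteq> v \<and> v \<noteq> w \<and> u \<noteq> w \<and>
          is_geodesic V E xs \<and> u \<in> set xs \<and> v \<in> set xs \<and> w \<in> set xs)"

definition gp_number :: "'a set \<Rightarrow> ('a \<Rightarrow> 'a \<Rightarrow> bool) \<Rightarrow> nat" where
  "gp_number V E = Max (card ` {S. gp_set V E S})"

(* A vertex of a complete binary tree of depth r is a 0/1-word w (bool list) of length \<le> r,
   the root being [] and the children of w being w@[b].  A vertex of GT(r) is a pair (c,w):
   c selects the copy; the leaves (length w = r) are identified, represented with c = False. *)
definition gt_V :: "nat \<Rightarrow> (bool \<times> bool list) set" where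
  "gt_V r = {(c, w). length w < r \<or> (length w = r \<and> c = False)}"

definition gt_child :: "nat \<Rightarrow> bool \<times> bool list \<Rightarrow> bool \<times> bool list \<Rightarrow> bool" where
  "gt_child r x y \<longleftrightarrow> x \<in> gt_V r \<and> length (snd x) < r \<and>
     (\<exists>b. snd y = snd x @ [b]) \<and>
     fst y = (if length (snd y) = r then False else fst x)"

definition gt_E :: "nat \<Rightarrow> bool \<times> bool list \<Rightarrow> bool \<times> bool list \<Rightarrow> bool" where
  "gt_E r x y \<longleftrightarrow> gt_child r x y \<or> gt_child r y x"

end

theory Submission
  imports Defs "HOL-Library.Sublist"
begin

text \<open>Forgetting the copy maps \<open>GT(r)\<close> onto the complete binary tree of depth \<open>r\<close>, and along
an edge the tree distance to a fixed word changes by exactly one; hence distances in \<open>GT(r)\<close>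
dominate tree distances, and between quasi-leaves the two coincide. On words of equal length
the tree distance is an ultrametric, so a geodesic through three distinct quasi-leaves would
violate \<open>d(x,z) \<le> max (d(x,y)) (d(y,z)) < d(x,y) + d(y,z)\<close>: the \<open>2^r\<close> quasi-leaves are in general
position. Conversely, the \<open>2^(r-1)\<close> geodesics joining two quasi-leaves through a root cover all
vertices, and a general position set meets each geodesic in at most two vertices.\<close>

lemma is_walk_iff_successively:
  "is_walk V E xs \<longleftrightarrow> xs \<noteq> [] \<and> set xs \<subseteq> V \<and> successively E xs"
  unfolding is_walk_def successively_conv_nth by blast

lemma is_walk_append_tl:
  assumes "is_walk V E xs" "is_walk V E ys" "last xs = hd ys"
  shows "is_walk V E (xs @ tl ys)"
proof -
  obtain y ys' where ys: "ys = y # ys'"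
    using assms(2) by (cases ys) (auto simp: is_walk_iff_successively)
  show ?thesis
    using assms by (auto simp: ys is_walk_iff_successively successively_append_iff successively_Cons)
qed

lemma hd_last_length_append_tl:
  assumes "xs \<noteq> []" "ys \<noteq> []" "last xs = hd ys"
  shows "hd (xs @ tl ys) = hd xs" "last (xs @ tl ys) = last ys"
    "length (xs @ tl ys) = length xs + length ys - 1"
  using assms by (cases ys; auto)+

lemma set_append_tl: "xs \<noteq> [] \<Longrightarrow> last xs = hd ys \<Longrightarrow> set (xs @ tl ys) = set xs \<union> set ys"
  by (cases ys) auto

lemma is_walk_rev:
  assumes "is_walk V E xs" "\<And>x y. E x y \<Longrightarrow> E y x"
  shows "is_walk V E (rev xs)"
  using assms by (auto simp: is_walk_iff_successively intro: successively_mono)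

lemma is_walk_slice:
  assumes "is_walk V E xs" "i \<le> k" "k < length xs"
  defines "ys \<equiv> drop i (take (Suc k) xs)"
  shows "is_walk V E ys" "hd ys = xs ! i" "last ys = xs ! k" "length ys = Suc k - i"
proof -
  have "xs = take i (take (Suc k) xs) @ ys @ drop (Suc k) xs"
    unfolding ys_def by (metis append_take_drop_id append_assoc)
  then have "successively E (take i (take (Suc k) xs) @ ys @ drop (Suc k) xs)"
    using assms(1) by (metis is_walk_iff_successively)
  then have "successively E ys" by (simp add: successively_append_iff)
  moreover have "set ys \<subseteq> set xs"
    unfolding ys_def by (meson in_set_dropD in_set_takeD subsetI)
  ultimately show "is_walk V E ys"
    using assms by (auto simp: is_walk_iff_successively ys_def)
  show "hd ys = xs ! i" "last ys = xs ! k" "length ys = Suc k - i"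
    using assms(2,3) by (auto simp: ys_def hd_drop_conv_nth last_conv_nth)
qed

lemma gdist_less_length:
  assumes "is_walk V E xs"
  shows "gdist V E (hd xs) (last xs) < length xs"
proof -
  have "length xs = Suc (length xs - 1)"
    using assms by (cases xs) (auto simp: is_walk_iff_successively)
  then have "gdist V E (hd xs) (last xs) \<le> length xs - 1"
    unfolding gdist_def using assms by (intro Least_le) blast
  then show ?thesis using \<open>length xs = Suc (length xs - 1)\<close> by linarith
qed

lemma shortest_walk_exists:
  assumes "is_walk V E xs"
  obtains ys where "is_walk V E ys" "hd ys = hd xs" "last ys = last xs"
    "length ys = Suc (gdist V E (hd xs) (last xs))"
proof -
  have "length xs = Suc (length xs - 1)"
    using assms by (cases xs) (auto simp: is_walk_iff_successively)
  then have "\<exists>n ys. is_walk V E ys \<and> hd ys = hd xs \<and> last ys = last xs \<and> length ys = Suc n"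
    using assms by blast
  from LeastI_ex[OF this] show ?thesis
    using that unfolding gdist_def by blast
qed

lemma gdist_triangle:
  assumes "is_walk V E xs" "hd xs = x" "last xs = y"
    and "is_walk V E ys" "hd ys = y" "last ys = z"
  shows "gdist V E x z \<le> gdist V E x y + gdist V E y z"
proof -
  obtain xs' where xs': "is_walk V E xs'" "hd xs' = x" "last xs' = y"
    "length xs' = Suc (gdist V E x y)"
    using shortest_walk_exists[OF assms(1)] assms(2,3) by metis
  obtain ys' where ys': "is_walk V E ys'" "hd ys' = y" "last ys' = z"
    "length ys' = Suc (gdist V E y z)"
    using shortest_walk_exists[OF assms(4)] assms(5,6) by metis
  have "is_walk V E (xs' @ tl ys')"
    using is_walk_append_tl xs' ys' by metis
  moreover have "xs' \<noteq> []" "ys' \<noteq> []" using xs' ys' by (auto simp: is_walk_def)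
  ultimately show ?thesis
    using gdist_less_length[of V E "xs' @ tl ys'"] hd_last_length_append_tl[of xs' ys']
      xs' ys' by simp
qed

lemma geodesic_gdist_nth:
  assumes g: "is_geodesic V E xs" and "i \<le> k" "k < length xs"
  shows "gdist V E (xs ! i) (xs ! k) = k - i"
proof -
  have w: "is_walk V E xs" and len: "length xs = Suc (gdist V E (hd xs) (last xs))"
    using g by (auto simp: is_geodesic_def)
  define n where "n = length xs - 1"
  have "xs \<noteq> []" using assms(3) by auto
  then have ends: "hd xs = xs ! 0" "last xs = xs ! n" "k \<le> n" "n < length xs"
    using assms by (simp_all add: n_def hd_conv_nth last_conv_nth)
  have slice: "is_walk V E (drop a (take (Suc b) xs))" "hd (drop a (take (Suc b) xs)) = xs ! a"
      "last (drop a (take (Suc b) xs)) = xs ! b" "length (drop a (take (Suc b) xs)) = Suc b - a"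
    if "a \<le> b" "b \<le> n" for a b
    using is_walk_slice[OF w, of a b] that ends by simp_all
  have dist_le: "gdist V E (xs ! a) (xs ! b) \<le> b - a" if "a \<le> b" "b \<le> n" for a b
    using gdist_less_length[OF slice(1)[OF that]] slice(2-4)[OF that] by simp
  have triangle: "gdist V E (xs ! a) (xs ! c) \<le> gdist V E (xs ! a) (xs ! b) + gdist V E (xs ! b) (xs ! c)"
    if "a \<le> b" "b \<le> c" "c \<le> n" for a b c
  proof -
    have "b \<le> n" using that by linarith
    from slice(1-3)[OF that(1) this] slice(1-3)[OF that(2,3)] show ?thesis by (rule gdist_triangle)
  qed
  have "gdist V E (xs ! 0) (xs ! n) = n"
    using len ends(1,2) unfolding n_def by simp
  then show ?thesis
    using triangle[of 0 i n] triangle[of i k n] dist_le[of 0 i] dist_le[of i k] dist_le[of k n]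
      ends(3) assms(2) by linarith
qed

lemma lipschitz_le_gdist:
  fixes f :: "'a \<Rightarrow> int"
  assumes "is_walk V E xs" "\<And>x y. E x y \<Longrightarrow> \<bar>f x - f y\<bar> \<le> 1"
  shows "\<bar>f (hd xs) - f (last xs)\<bar> \<le> int (gdist V E (hd xs) (last xs))"
proof -
  obtain ys where ys: "is_walk V E ys" "hd ys = hd xs" "last ys = last xs"
    "length ys = Suc (gdist V E (hd xs) (last xs))"
    using shortest_walk_exists[OF assms(1)] by blast
  have "successively (\<lambda>x y. \<bar>f x - f y\<bar> \<le> 1) ys" "ys \<noteq> []"
    using ys(1) assms(2) by (auto simp: is_walk_iff_successively intro: successively_mono)
  then have "\<bar>f (hd ys) - f (last ys)\<bar> \<le> int (length ys) - 1"
    by (induction ys rule: induct_list012) auto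
  then show ?thesis using ys by simp
qed

lemma gp_setI:
  assumes "S \<subseteq> V"
    and no_triple: "\<And>xs i j k. is_geodesic V E xs \<Longrightarrow> i < j \<Longrightarrow> j < k \<Longrightarrow> k < length xs \<Longrightarrow>
      xs ! i \<in> S \<Longrightarrow> xs ! j \<in> S \<Longrightarrow> xs ! k \<in> S \<Longrightarrow>
      xs ! i \<noteq> xs ! j \<Longrightarrow> xs ! j \<noteq> xs ! k \<Longrightarrow> xs ! i \<noteq> xs ! k \<Longrightarrow> False"
  shows "gp_set V E S"
  unfolding gp_set_def
proof (intro conjI notI)
  show "S \<subseteq> V" by fact
  assume "\<exists>u v w xs. u \<in> S \<and> v \<in> S \<and> w \<in> S \<and> u \<noteq> v \<and> v \<noteq> w \<and> u \<noteq> w \<and>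
    is_geodesic V E xs \<and> u \<in> set xs \<and> v \<in> set xs \<and> w \<in> set xs"
  then obtain u v w xs where S: "u \<in> S" "v \<in> S" "w \<in> S"
    and d: "u \<noteq> v" "v \<noteq> w" "u \<noteq> w" and g: "is_geodesic V E xs"
    and mem: "u \<in> set xs" "v \<in> set xs" "w \<in> set xs"
    by blast
  obtain i j k where ijk: "i < length xs" "j < length xs" "k < length xs"
    and uvw: "xs ! i = u" "xs ! j = v" "xs ! k = w"
    using mem by (metis in_set_conv_nth)
  note triple = no_triple[OF g]
  have "i \<noteq> j" "j \<noteq> k" "i \<noteq> k" using d uvw by auto
  then consider "i < j" "j < k" | "i < k" "k < j" | "j < i" "i < k"
    | "j < k" "k < i" | "k < i" "i < j" | "k < j" "j < i"
    by linarith
  then show False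
  proof cases
    case 1 then show ?thesis using triple[of i j k] ijk S d uvw by simp
  next
    case 2 then show ?thesis using triple[of i k j] ijk S d uvw by auto
  next
    case 3 then show ?thesis using triple[of j i k] ijk S d uvw by auto
  next
    case 4 then show ?thesis using triple[of j k i] ijk S d uvw by auto
  next
    case 5 then show ?thesis using triple[of k i j] ijk S d uvw by auto
  next
    case 6 then show ?thesis using triple[of k j i] ijk S d uvw by auto
  qed
qed

lemma card_gp_set_le_geodesic_cover:
  assumes S: "gp_set V E S" and "finite I"
    and geodesic: "\<And>p. p \<in> I \<Longrightarrow> is_geodesic V E (P p)"
    and cover: "V \<subseteq> (\<Union>p\<in>I. set (P p))"
  shows "card S \<le> 2 * card I"
proof -
  have at_most_two: "card (S \<inter> set (P p)) \<le> 2" if "p \<in> I" for p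
  proof (rule ccontr)
    assume "\<not> ?thesis"
    then have "3 \<le> card (S \<inter> set (P p))" by simp
    then obtain B where "B \<subseteq> S \<inter> set (P p)" "card B = 3"
      by (meson obtain_subset_with_card_n)
    then obtain u v w where "u \<in> S \<inter> set (P p)" "v \<in> S \<inter> set (P p)" "w \<in> S \<inter> set (P p)"
      "u \<noteq> v" "v \<noteq> w" "u \<noteq> w"
      unfolding card_3_iff by blast
    with geodesic[OF that] S show False
      unfolding gp_set_def by (metis IntD1 IntD2)
  qed
  have "S \<subseteq> (\<Union>p\<in>I. S \<inter> set (P p))"
    using S cover unfolding gp_set_def by auto
  then have "card S \<le> card (\<Union>p\<in>I. S \<inter> set (P p))"
    by (simp add: card_mono \<open>finite I\<close>)
  also have "\<dots> \<le> (\<Sum>p\<in>I. card (S \<inter> set (P p)))"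
    by (rule card_UN_le[OF \<open>finite I\<close>])
  also have "\<dots> \<le> (\<Sum>p\<in>I. 2)"
    using at_most_two by (rule sum_mono)
  finally show ?thesis by simp
qed

definition tree_dist :: "'a list \<Rightarrow> 'a list \<Rightarrow> nat" where
  "tree_dist u v =
     (length u - length (longest_common_prefix u v)) + (length v - length (longest_common_prefix u v))"

lemma longest_common_prefix_self [simp]: "longest_common_prefix xs xs = xs"
  by (induction xs) auto

lemma take_length_prefix: "prefix p xs \<Longrightarrow> take (length p) xs = p"
  by (auto simp: prefix_def)

lemma tree_dist_self [simp]: "tree_dist u u = 0"
  by (simp add: tree_dist_def)

lemma longest_common_prefix_snoc:
  "longest_common_prefix (u @ [b]) v = longest_common_prefix u v \<or>
   longest_common_prefix u v = u \<and> longest_common_prefix (u @ [b]) v = u @ [b]"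
proof -
  let ?p = "longest_common_prefix (u @ [b]) v" and ?q = "longest_common_prefix u v"
  have "prefix ?p (u @ [b])" "prefix ?p v" "prefix ?q u" "prefix ?q v"
    by (rule longest_common_prefix_prefix1 longest_common_prefix_prefix2)+
  then consider "?p = u @ [b]" | "prefix ?p u"
    by (metis prefix_snoc)
  then show ?thesis
  proof cases
    case 1
    then have "prefix u v" using \<open>prefix ?p v\<close> by (metis append_prefixD)
    then show ?thesis using 1 longest_common_prefix_max_prefix[of u u v] \<open>prefix ?q u\<close>
      by (metis prefix_order.antisym prefix_order.refl)
  next
    case 2
    then have "prefix ?p ?q"
      using \<open>prefix ?p v\<close> by (rule longest_common_prefix_max_prefix)
    moreover have "prefix ?q ?p"
      using \<open>prefix ?q u\<close> \<open>prefix ?q v\<close> by (simp add: longest_common_prefix_max_prefix)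
    ultimately show ?thesis by (metis prefix_order.antisym)
  qed
qed

lemma tree_dist_snoc:
  "tree_dist (u @ [b]) v = Suc (tree_dist u v) \<or> Suc (tree_dist (u @ [b]) v) = tree_dist u v"
proof -
  have "length (longest_common_prefix u v) \<le> length u"
    "length (longest_common_prefix (u @ [b]) v) \<le> length v"
    by (simp_all add: prefix_length_le longest_common_prefix_prefix1 longest_common_prefix_prefix2)
  then show ?thesis
    using longest_common_prefix_snoc[of u b v] unfolding tree_dist_def by auto
qed

lemma tree_dist_same_length:
  assumes "length u = n" "length v = n"
  shows "tree_dist u v = 2 * (n - length (longest_common_prefix u v))"
  using assms by (simp add: tree_dist_def)

lemma length_longest_common_prefix_less:
  assumes "length u = length v" "u \<noteq> v"
  shows "length (longest_common_prefix u v) < length u"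
proof (rule ccontr)
  let ?p = "longest_common_prefix u v"
  have "prefix ?p u" "prefix ?p v"
    by (rule longest_common_prefix_prefix1 longest_common_prefix_prefix2)+
  moreover assume "\<not> ?thesis"
  ultimately have "length ?p = length u" "length ?p = length v"
    using prefix_length_le assms(1) by (metis le_antisym not_less)+
  with \<open>prefix ?p u\<close> \<open>prefix ?p v\<close> have "?p = u" "?p = v"
    unfolding prefix_def by (metis append_Nil2 append_eq_append_conv)+
  with assms(2) show False by simp
qed

lemma tree_dist_less_add:
  assumes "length x = n" "length y = n" "length z = n" "x \<noteq> y" "y \<noteq> z"
  shows "tree_dist x z < tree_dist x y + tree_dist y z"
proof -
  let ?p = "longest_common_prefix x y" and ?q = "longest_common_prefix y z"
  have "prefix ?p x" "prefix ?p y" "prefix ?q y" "prefix ?q z"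
    by (simp_all add: longest_common_prefix_prefix1 longest_common_prefix_prefix2)
  then have "prefix ?p ?q \<or> prefix ?q ?p"
    by (metis prefix_same_cases)
  then have "prefix ?p (longest_common_prefix x z) \<or> prefix ?q (longest_common_prefix x z)"
    using \<open>prefix ?p x\<close> \<open>prefix ?q z\<close> \<open>prefix ?p y\<close> \<open>prefix ?q y\<close>
    by (metis longest_common_prefix_max_prefix prefix_order.trans)
  then have "min (length ?p) (length ?q) \<le> length (longest_common_prefix x z)"
    by (auto dest: prefix_length_le)
  moreover have "length ?p < n" "length ?q < n"
    using length_longest_common_prefix_less assms by metis+
  ultimately show ?thesis
    using assms(1-3) by (simp add: tree_dist_same_length)
qed

lemma gt_E_sym: "gt_E r x y \<Longrightarrow> gt_E r y x"
  unfolding gt_E_def by blast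

lemma gt_E_snd_cases:
  assumes "gt_E r x y"
  obtains b where "snd y = snd x @ [b]" | b where "snd x = snd y @ [b]"
  using assms unfolding gt_E_def gt_child_def by blast

lemma tree_dist_le_gt_gdist:
  assumes "is_walk (gt_V r) (gt_E r) xs"
  shows "tree_dist (snd (hd xs)) (snd (last xs)) \<le> gdist (gt_V r) (gt_E r) (hd xs) (last xs)"
proof -
  define f where "f x = int (tree_dist (snd x) (snd (last xs)))" for x :: "bool \<times> bool list"
  have snoc: "\<bar>int (tree_dist (u @ [b]) l) - int (tree_dist u l)\<bar> \<le> 1" for u b l
    using tree_dist_snoc[of u b l] by linarith
  have lipschitz: "\<bar>f x - f y\<bar> \<le> 1" if "gt_E r x y" for x y
    using that
  proof (cases rule: gt_E_snd_cases)
    case (1 b)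
    then show ?thesis using snoc[of "snd x" b] by (simp add: f_def abs_minus_commute)
  next
    case (2 b)
    then show ?thesis using snoc[of "snd y" b] by (simp add: f_def)
  qed
  from lipschitz_le_gdist[of _ _ xs f, OF assms lipschitz] show ?thesis by (simp add: f_def)
qed

definition gt_vertex :: "nat \<Rightarrow> bool \<Rightarrow> bool list \<Rightarrow> bool \<times> bool list" where
  "gt_vertex r c u = (if length u = r then False else c, u)"

lemma gt_vertex_in_gt_V: "length u \<le> r \<Longrightarrow> gt_vertex r c u \<in> gt_V r"
  by (auto simp: gt_vertex_def gt_V_def)

lemma gt_E_gt_vertex_snoc: "length u < r \<Longrightarrow> gt_E r (gt_vertex r c u) (gt_vertex r c (u @ [b]))"
  unfolding gt_E_def gt_child_def using gt_vertex_in_gt_V[of u r c] by (auto simp: gt_vertex_def)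

definition gt_branch :: "nat \<Rightarrow> bool \<Rightarrow> bool list \<Rightarrow> nat \<Rightarrow> (bool \<times> bool list) list" where
  "gt_branch r c w m = map (\<lambda>i. gt_vertex r c (take i w)) [m..<Suc (length w)]"

lemma gt_branch_walk:
  assumes "length w \<le> r" "m \<le> length w"
  shows "is_walk (gt_V r) (gt_E r) (gt_branch r c w m)"
  unfolding is_walk_def
proof (intro conjI allI impI)
  show "gt_branch r c w m \<noteq> []" "set (gt_branch r c w m) \<subseteq> gt_V r"
    using assms by (auto simp: gt_branch_def intro!: gt_vertex_in_gt_V)
  fix i assume i: "Suc i < length (gt_branch r c w m)"
  then have "m + i < length w" by (simp add: gt_branch_def del: upt_Suc)
  then have "take (Suc (m + i)) w = take (m + i) w @ [w ! (m + i)]" "length (take (m + i) w) < r"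
    using assms(1) by (simp_all add: take_Suc_conv_app_nth)
  then show "gt_E r (gt_branch r c w m ! i) (gt_branch r c w m ! Suc i)"
    using i by (simp add: gt_branch_def gt_E_gt_vertex_snoc del: upt_Suc)
qed

lemma hd_last_length_gt_branch:
  assumes "m \<le> length w"
  shows "hd (gt_branch r c w m) = gt_vertex r c (take m w)"
    "last (gt_branch r c w m) = gt_vertex r c w"
    "length (gt_branch r c w m) = Suc (length w) - m"
  using assms by (auto simp: gt_branch_def hd_map last_map simp del: upt_Suc)

lemma gt_vertex_in_gt_branch:
  "m \<le> i \<Longrightarrow> i \<le> length w \<Longrightarrow> gt_vertex r c (take i w) \<in> set (gt_branch r c w m)"
  by (auto simp: gt_branch_def simp del: upt_Suc)

definition leaf_walk :: "nat \<Rightarrow> bool \<Rightarrow> bool list \<Rightarrow> bool list \<Rightarrow> (bool \<times> bool list) list" where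
  "leaf_walk r c x z =
     (let m = length (longest_common_prefix x z)
      in rev (gt_branch r c x m) @ tl (gt_branch r c z m))"

lemma leaf_walk_props:
  assumes "length x = r" "length z = r"
  shows "is_walk (gt_V r) (gt_E r) (leaf_walk r c x z)"
    "hd (leaf_walk r c x z) = (False, x)" "last (leaf_walk r c x z) = (False, z)"
    "length (leaf_walk r c x z) = Suc (tree_dist x z)"
    "set (leaf_walk r c x z) =
       set (gt_branch r c x (length (longest_common_prefix x z))) \<union>
       set (gt_branch r c z (length (longest_common_prefix x z)))"
proof -
  define m where "m = length (longest_common_prefix x z)"
  have "prefix (longest_common_prefix x z) x" "prefix (longest_common_prefix x z) z"
    by (rule longest_common_prefix_prefix1 longest_common_prefix_prefix2)+
  then have m: "m \<le> r" "take m x = take m z"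
    using assms prefix_length_le take_length_prefix unfolding m_def by metis+
  define P where "P = gt_branch r c x m"
  define Q where "Q = gt_branch r c z m"
  have "is_walk (gt_V r) (gt_E r) P"
    unfolding P_def by (rule gt_branch_walk) (use assms m in auto)
  then have walk_P: "is_walk (gt_V r) (gt_E r) (rev P)"
    using gt_E_sym by (rule is_walk_rev)
  have walk_Q: "is_walk (gt_V r) (gt_E r) Q"
    unfolding Q_def by (rule gt_branch_walk) (use assms m in auto)
  have P: "hd P = gt_vertex r c (take m x)" "last P = (False, x)" "length P = Suc r - m"
    unfolding P_def using hd_last_length_gt_branch[of m x r c] assms m by (simp_all add: gt_vertex_def)
  have Q: "hd Q = gt_vertex r c (take m z)" "last Q = (False, z)" "length Q = Suc r - m"
    unfolding Q_def using hd_last_length_gt_branch[of m z r c] assms m by (simp_all add: gt_vertex_def)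
  have joint: "last (rev P) = hd Q" "rev P \<noteq> []" "Q \<noteq> []"
    using P(1,3) Q(1,3) m by (simp_all add: last_rev flip: length_greater_0_conv)
  have leaf_walk: "leaf_walk r c x z = rev P @ tl Q"
    by (simp add: leaf_walk_def Let_def m_def P_def Q_def)
  show "is_walk (gt_V r) (gt_E r) (leaf_walk r c x z)"
    unfolding leaf_walk by (rule is_walk_append_tl[OF walk_P walk_Q joint(1)])
  have "tree_dist x z = (r - m) + (r - m)"
    using assms by (simp add: tree_dist_def m_def)
  then show "hd (leaf_walk r c x z) = (False, x)" "last (leaf_walk r c x z) = (False, z)"
    "length (leaf_walk r c x z) = Suc (tree_dist x z)"
    unfolding leaf_walk hd_last_length_append_tl[OF joint(2,3,1)]
    using P Q m by (simp_all add: hd_rev)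
  show "set (leaf_walk r c x z) =
      set (gt_branch r c x (length (longest_common_prefix x z))) \<union>
      set (gt_branch r c z (length (longest_common_prefix x z)))"
    unfolding leaf_walk set_append_tl[OF joint(2,1)] by (simp add: P_def Q_def m_def)
qed

lemma leaf_walk_geodesic:
  assumes "length x = r" "length z = r"
  shows "is_geodesic (gt_V r) (gt_E r) (leaf_walk r c x z)"
proof -
  note props = leaf_walk_props[OF assms, of c]
  from gdist_less_length[OF props(1)] tree_dist_le_gt_gdist[OF props(1)] show ?thesis
    unfolding is_geodesic_def props(2-4) using props(1) by simp
qed

lemma gdist_gt_leaves:
  assumes "length x = r" "length z = r"
  shows "gdist (gt_V r) (gt_E r) (False, x) (False, z) = tree_dist x z"
  using leaf_walk_geodesic[OF assms, of False] leaf_walk_props(2-4)[OF assms, of False]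
  by (simp add: is_geodesic_def)

definition gt_leaves :: "nat \<Rightarrow> (bool \<times> bool list) set" where
  "gt_leaves r = Pair False ` {w. length w = r}"

lemma card_bool_lists_length_eq: "card {u :: bool list. length u = n} = 2 ^ n"
  using card_lists_length_eq[of "UNIV :: bool set" n] by simp

lemma card_gt_leaves: "card (gt_leaves r) = 2 ^ r"
  unfolding gt_leaves_def
  by (subst card_image) (auto simp: inj_on_def card_bool_lists_length_eq)

lemma gp_set_gt_leaves: "gp_set (gt_V r) (gt_E r) (gt_leaves r)"
proof (rule gp_setI)
  show "gt_leaves r \<subseteq> gt_V r" by (auto simp: gt_leaves_def gt_V_def)
  fix xs i j k
  assume g: "is_geodesic (gt_V r) (gt_E r) xs" and ijk: "i < j" "j < k" "k < length xs"
    and leaves: "xs ! i \<in> gt_leaves r" "xs ! j \<in> gt_leaves r" "xs ! k \<in> gt_leaves r"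
    and distinct: "xs ! i \<noteq> xs ! j" "xs ! j \<noteq> xs ! k"
  obtain x y z where xyz: "xs ! i = (False, x)" "xs ! j = (False, y)" "xs ! k = (False, z)"
    and len: "length x = r" "length y = r" "length z = r"
    using leaves by (auto simp: gt_leaves_def)
  have "gdist (gt_V r) (gt_E r) (xs ! i) (xs ! k)
      = gdist (gt_V r) (gt_E r) (xs ! i) (xs ! j) + gdist (gt_V r) (gt_E r) (xs ! j) (xs ! k)"
    using geodesic_gdist_nth[OF g] ijk by simp
  then have "tree_dist x z = tree_dist x y + tree_dist y z"
    unfolding xyz using gdist_gt_leaves len by simp
  moreover have "tree_dist x z < tree_dist x y + tree_dist y z"
    using tree_dist_less_add len distinct xyz by simp
  ultimately show False by simp
qed

text \<open>Taking the copy to be the last letter of \<open>u\<close> lets the walks between \<open>0u\<close> and \<open>1u\<close>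
pass through every non-leaf vertex of both copies.\<close>

lemma gt_V_covered_by_leaf_walks:
  assumes "2 \<le> r" "v \<in> gt_V r"
  shows "\<exists>u. length u = r - 1 \<and> v \<in> set (leaf_walk r (last u) (False # u) (True # u))"
proof -
  obtain c w where v: "v = (c, w)" by fastforce
  define leaf where
    "leaf = (if length w = r then w else w @ replicate (r - 1 - length w) False @ [c])"
  have w: "length w \<le> r" "length w = r \<Longrightarrow> c = False"
    using assms(2) by (auto simp: v gt_V_def)
  then have leaf: "length leaf = r" "take (length w) leaf = w"
    by (auto simp: leaf_def)
  then obtain a u where au: "leaf = a # u" using assms(1) by (cases leaf) auto
  have u: "length u = r - 1" "u \<noteq> []" using leaf(1) au assms(1) by auto
  have "v = gt_vertex r (last u) (take (length w) leaf)"
  proof (cases "length w = r")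
    case True then show ?thesis using w leaf by (simp add: v gt_vertex_def)
  next
    case False
    then have "last u = c" using au u(2) by (metis last_ConsR last_snoc leaf_def append_assoc)
    then show ?thesis using False leaf by (simp add: v gt_vertex_def)
  qed
  then have "v \<in> set (gt_branch r (last u) leaf 0)"
    using gt_vertex_in_gt_branch[of 0 "length w" leaf] w leaf by simp
  moreover have "length (False # u) = r" "length (True # u) = r" using u assms(1) by simp_all
  ultimately have "v \<in> set (leaf_walk r (last u) (False # u) (True # u))"
    using leaf_walk_props(5)[of "False # u" r "True # u" "last u"] au by (cases a) auto
  with u show ?thesis by blast
qed

lemma card_gp_set_gt_le:
  assumes "2 \<le> r" "gp_set (gt_V r) (gt_E r) S"
  shows "card S \<le> 2 ^ r"
proof -
  let ?I = "{u :: bool list. length u = r - 1}"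
  have "finite ?I"
    using finite_lists_length_eq[of "UNIV :: bool set" "r - 1"] by simp
  moreover have "is_geodesic (gt_V r) (gt_E r) (leaf_walk r (last u) (False # u) (True # u))"
    if "u \<in> ?I" for u
    using that assms(1) by (intro leaf_walk_geodesic) auto
  moreover have "gt_V r \<subseteq> (\<Union>u\<in>?I. set (leaf_walk r (last u) (False # u) (True # u)))"
    using gt_V_covered_by_leaf_walks[OF assms(1)] by blast
  ultimately have "card S \<le> 2 * card ?I"
    by (rule card_gp_set_le_geodesic_cover[OF assms(2)])
  also have "\<dots> = 2 ^ r"
    using assms(1) by (simp add: card_bool_lists_length_eq power_eq_if[of 2 r])
  finally show ?thesis .
qed

theorem proposition3p8:
  fixes r :: nat
  assumes "r \<ge> 2"
  shows "gp_number (gt_V r) (gt_E r) = 2 ^ r"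
  unfolding gp_number_def
proof (rule Max_eqI)
  have "card ` {S. gp_set (gt_V r) (gt_E r) S} \<subseteq> {..2 ^ r}"
    using card_gp_set_gt_le[OF assms] by auto
  then show "finite (card ` {S. gp_set (gt_V r) (gt_E r) S})"
    by (rule finite_subset) simp
  show "n \<le> 2 ^ r" if "n \<in> card ` {S. gp_set (gt_V r) (gt_E r) S}" for n
    using that card_gp_set_gt_le[OF assms] by auto
  show "2 ^ r \<in> card ` {S. gp_set (gt_V r) (gt_E r) S}"
    using gp_set_gt_leaves card_gt_leaves by (metis imageI mem_Collect_eq)
qed

end
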